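(* Let $m\geq 1$ be an integer. For all integers $n\geq 1$ and all real $x\in(0,\pi)$, $$\sum_{\substack{k=0\\ k \text{ even}}}^n \binom{n-k+m}{m}\cos\bigl((k+1/2)x\bigr)>0 \qquad\text{and}\qquad \sum_{\substack{k=0\\ k \text{ even}}}^n \binom{n-k+m}{m}\sin\bigl((k+1/2)x\bigr)>0.$$ In both cases the lower bound $0$ is sharp. *)

theory Defs
  imports Complex_Main
begin

definition cos_even_sum :: "nat \<Rightarrow> nat \<Rightarrow> real \<Rightarrow> real" where
  "cos_even_sum m n x = (\<Sum>k\<in>{k. k \<le> n \<and> even k}. real ((n - k + m) choose m) * cos ((real k + 1/2) * x))"

definition sin_even_sum :: "nat \<Rightarrow> nat \<Rightarrow> real \<Rightarrow> real" where
  "sin_even_sum m n x = (\<Sum>k\<in>{k. k \<le> n \<and> even k}. real ((n - k + m) choose m) * sin ((real k + 1/2) * x))"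

end

theory Submission
  imports Defs
begin

text \<open>
  Write \<open>E\<^sub>m(n)\<close> for the sum with weights \<open>(n - k + m choose m)\<close> over even \<open>k \<le> n\<close>.
  Pascal's rule gives \<open>E\<^sub>m\<^sub>+\<^sub>1(n) = \<Sum>l\<le>n. E\<^sub>m(l)\<close>, so positivity propagates from
  \<open>m = 1\<close> to all \<open>m \<ge> 1\<close>. For \<open>m = 0\<close> and \<open>x = 2y\<close> the cosine sum telescopes:
  \<open>sin (2y) E\<^sub>0(l) = cos ((2J+1)y) sin ((2J+2)y)\<close> with \<open>J = l div 2\<close>. Splitting this product
  as \<open>cos y sin ((4J+2)y) / 2 + sin y cos\<^sup>2 ((2J+1)y)\<close>, the first parts have Fejer-type
  partial sums \<open>\<Sum>J<M. sin ((4J+2)y) = sin\<^sup>2 (2My) / sin (2y) \<ge> 0\<close> and the second parts are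
  positive, whence \<open>E\<^sub>1(n) > 0\<close>.
  The sine sum is the cosine sum at \<open>\<pi> - x\<close>. Sharpness: for \<open>n = 1\<close> the sine sum is
  \<open>(m + 1) sin (x/2)\<close>, which tends to \<open>0\<close> as \<open>x \<rightarrow> 0\<close>.
\<close>

definition even_binom_sum :: "nat \<Rightarrow> nat \<Rightarrow> (nat \<Rightarrow> real) \<Rightarrow> real" where
  "even_binom_sum m n g = (\<Sum>k\<le>n. if even k then real ((n - k + m) choose m) * g k else 0)"

lemma sum_even_atMost_eq_sum_if:
  "(\<Sum>k\<in>{k. k \<le> (n::nat) \<and> even k}. f k) = (\<Sum>k\<le>n. if even k then f k else (0::'a::comm_monoid_add))"
proof -
  have "{k. k \<le> n \<and> even k} = {k\<in>{..n}. even k}" by auto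
  then show ?thesis by (simp add: sum.inter_filter[symmetric])
qed

lemma cos_even_sum_eq: "cos_even_sum m n x = even_binom_sum m n (\<lambda>k. cos ((real k + 1/2) * x))"
  unfolding cos_even_sum_def even_binom_sum_def sum_even_atMost_eq_sum_if ..

lemma sum_if_even_atMost_eq_sum_double:
  "(\<Sum>k\<le>(l::nat). if even k then f k else (0::'a::comm_monoid_add)) = (\<Sum>j\<le>l div 2. f (2 * j))"
proof -
  have "(*) 2 ` {..l div 2} = {k. k \<le> l \<and> even k}" by (auto elim!: evenE)
  moreover have "sum f ((*) 2 ` {..l div 2}) = (\<Sum>j\<le>l div 2. f (2 * j))"
    by (simp add: sum.reindex inj_on_def)
  ultimately show ?thesis by (simp add: sum_even_atMost_eq_sum_if)
qed

lemma even_binom_sum_0_left: "even_binom_sum 0 l g = (\<Sum>j\<le>l div 2. g (2 * j))"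
  unfolding even_binom_sum_def by (simp add: sum_if_even_atMost_eq_sum_double)

lemma even_binom_sum_0_right [simp]: "even_binom_sum m 0 g = g 0"
  by (simp add: even_binom_sum_def)

lemma even_binom_sum_Suc_Suc:
  "even_binom_sum (Suc m) (Suc n) g = even_binom_sum m (Suc n) g + even_binom_sum (Suc m) n g"
proof -
  have pascal: "real ((Suc n - k + Suc m) choose Suc m)
      = real ((Suc n - k + m) choose m) + real ((n - k + Suc m) choose Suc m)" if "k \<le> n" for k
  proof -
    obtain a where "n = k + a" using \<open>k \<le> n\<close> le_Suc_ex by blast
    then show ?thesis by simp
  qed
  have "(\<Sum>k\<le>n. if even k then real ((Suc n - k + Suc m) choose Suc m) * g k else 0)
      = (\<Sum>k\<le>n. if even k then real ((Suc n - k + m) choose m) * g k else 0)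
        + (\<Sum>k\<le>n. if even k then real ((n - k + Suc m) choose Suc m) * g k else 0)"
    unfolding sum.distrib[symmetric]
    by (rule sum.cong) (simp_all only: atMost_iff pascal distrib_right if_distrib, simp)
  then show ?thesis by (simp add: even_binom_sum_def)
qed

lemma even_binom_sum_Suc_left: "even_binom_sum (Suc m) n g = (\<Sum>l\<le>n. even_binom_sum m l g)"
  by (induction n) (simp_all add: even_binom_sum_Suc_Suc)

lemma even_binom_sum_Suc_left_pos:
  assumes "\<And>l. 0 < even_binom_sum m l g"
  shows "0 < even_binom_sum (Suc m) n g"
  unfolding even_binom_sum_Suc_left using assms assms[of 0]
  by (intro sum_pos2[where i = 0]) (auto intro: less_imp_le)

lemma cos_sin_step_identity:
  fixes a y :: real
  shows "cos (a - y) * sin a + sin (2 * y) * cos (2 * a + y) = cos (a + y) * sin (a + 2 * y)"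
proof -
  have "sin a ^ 2 + cos a ^ 2 = 1" "sin y ^ 2 + cos y ^ 2 = 1" by simp_all
  then show ?thesis unfolding sin_add cos_add sin_diff cos_diff sin_double cos_double by algebra
qed

lemma sin_double_mult_sum_cos:
  fixes y :: real
  shows "sin (2 * y) * (\<Sum>j\<le>J. cos ((4 * real j + 1) * y))
    = cos ((2 * real J + 1) * y) * sin ((2 * real J + 2) * y)"
proof (induction J)
  case (Suc J)
  define a where "a = (2 * real J + 2) * y"
  have "sin (2 * y) * (\<Sum>j\<le>Suc J. cos ((4 * real j + 1) * y))
      = cos (a - y) * sin a + sin (2 * y) * cos (2 * a + y)"
  proof -
    have "(2 * real J + 1) * y = a - y" "(2 * real J + 2) * y = a"
      "(4 * real (Suc J) + 1) * y = 2 * a + y"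
      by (simp_all add: a_def algebra_simps)
    then show ?thesis by (simp only: sum.atMost_Suc distrib_left Suc.IH)
  qed
  also have "\<dots> = cos (a + y) * sin (a + 2 * y)" by (rule cos_sin_step_identity)
  finally show ?case by (simp add: a_def algebra_simps)
qed (simp add: mult.commute)

lemma sin_double_mult_sum_sin:
  fixes y :: real
  shows "sin (2 * y) * (\<Sum>j<M. sin ((4 * real j + 2) * y)) = sin (2 * real M * y) ^ 2"
proof (induction M)
  case (Suc M)
  define a where "a = (2 * real M + 1) * y"
  have "sin (2 * y) * sin (2 * a) = sin (a + y) ^ 2 - sin (a - y) ^ 2"
    unfolding sin_add cos_add sin_diff cos_diff sin_double by algebra
  moreover have "2 * a = (4 * real M + 2) * y" "a + y = 2 * real (Suc M) * y" "a - y = 2 * real M * y"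
    by (simp_all add: a_def algebra_simps)
  ultimately show ?case using Suc.IH by (simp add: distrib_left)
qed simp

lemma sum_sin_nonneg:
  fixes y :: real
  assumes "0 < y" "y < pi / 2"
  shows "0 \<le> (\<Sum>j<M. sin ((4 * real j + 2) * y))"
proof -
  have "0 < sin (2 * y)" using assms by (intro sin_gt_zero) auto
  moreover have "0 \<le> sin (2 * y) * (\<Sum>j<M. sin ((4 * real j + 2) * y))"
    unfolding sin_double_mult_sum_sin by simp
  ultimately show ?thesis by (simp add: zero_le_mult_iff)
qed

lemma sum_cos_mult_sin_pos:
  fixes y :: real
  assumes "0 < y" "y < pi / 2" "0 < M"
  shows "0 < (\<Sum>j<M. cos ((2 * real j + 1) * y) * sin ((2 * real j + 2) * y))"
proof -
  have product_to_sum: "cos ((2 * real j + 1) * y) * sin ((2 * real j + 2) * y)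
      = cos y / 2 * sin ((4 * real j + 2) * y) + sin y * cos ((2 * real j + 1) * y) ^ 2" for j
  proof -
    have "cos ((2 * real j + 1) * y) * sin ((2 * real j + 1) * y + y)
        = cos y / 2 * sin (2 * ((2 * real j + 1) * y)) + sin y * cos ((2 * real j + 1) * y) ^ 2"
      unfolding sin_add sin_double by algebra
    then show ?thesis by (simp add: algebra_simps)
  qed
  have "0 \<le> cos y / 2 * (\<Sum>j<M. sin ((4 * real j + 2) * y))"
    using assms sum_sin_nonneg by (intro mult_nonneg_nonneg) (auto intro: cos_ge_zero)
  moreover have "0 < (\<Sum>j<M. sin y * cos ((2 * real j + 1) * y) ^ 2)"
  proof (rule sum_pos2[where i = 0])
    have "0 < sin y" "0 < cos y" using assms by (auto intro: sin_gt_zero cos_gt_zero)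
    then show "0 < sin y * cos ((2 * real 0 + 1) * y) ^ 2"
      "\<And>j. j \<in> {..<M} \<Longrightarrow> 0 \<le> sin y * cos ((2 * real j + 1) * y) ^ 2"
      by simp_all
  qed (use assms in simp_all)
  ultimately show ?thesis by (simp add: product_to_sum sum.distrib sum_distrib_left)
qed

lemma sum_atMost_div2:
  "(\<Sum>l\<le>(n::nat). f (l div 2)) = (\<Sum>j<n div 2 + 1. f j) + (\<Sum>j<(n + 1) div 2. (f j :: 'a::comm_monoid_add))"
proof (induction n)
  case (Suc n)
  show ?case
  proof (cases "even n")
    case True
    then have "Suc n div 2 = n div 2" "(Suc n + 1) div 2 = Suc (n div 2)" "(n + 1) div 2 = n div 2"
      by presburger+
    then show ?thesis using Suc.IH by (simp add: add_ac)
  next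
    case False
    then have "Suc n div 2 = Suc (n div 2)" "(Suc n + 1) div 2 = Suc (n div 2)" "(n + 1) div 2 = Suc (n div 2)"
      by presburger+
    then show ?thesis using Suc.IH by (simp add: add_ac)
  qed
qed simp

lemma even_binom_sum_one_cos_pos:
  assumes "0 < x" "x < pi"
  shows "0 < even_binom_sum 1 n (\<lambda>k. cos ((real k + 1/2) * x))"
proof -
  define y where "y = x / 2"
  have y: "0 < y" "y < pi / 2" using assms by (simp_all add: y_def)
  define h where "h j = cos ((2 * real j + 1) * y) * sin ((2 * real j + 2) * y)" for j
  have "sin (2 * y) * even_binom_sum 0 l (\<lambda>k. cos ((real k + 1/2) * x)) = h (l div 2)" for l
  proof -
    have "cos ((real (2 * j) + 1/2) * x) = cos ((4 * real j + 1) * y)" for j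
      by (simp add: y_def algebra_simps)
    then show ?thesis by (simp add: even_binom_sum_0_left sin_double_mult_sum_cos h_def)
  qed
  then have "sin (2 * y) * even_binom_sum 1 n (\<lambda>k. cos ((real k + 1/2) * x))
      = (\<Sum>j<n div 2 + 1. h j) + (\<Sum>j<(n + 1) div 2. h j)"
    by (simp add: even_binom_sum_Suc_left[where m = 0, simplified] sum_distrib_left sum_atMost_div2)
  moreover have "0 < (\<Sum>j<n div 2 + 1. h j)"
    unfolding h_def using y by (intro sum_cos_mult_sin_pos) simp_all
  moreover have "0 \<le> (\<Sum>j<(n + 1) div 2. h j)"
    unfolding h_def using y sum_cos_mult_sin_pos[of y "(n + 1) div 2"] by (cases "(n + 1) div 2") auto
  moreover have "0 < sin (2 * y)" using y by (intro sin_gt_zero) simp_all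
  ultimately show ?thesis by (metis add_pos_nonneg zero_less_mult_pos)
qed

lemma cos_even_sum_pos:
  assumes "1 \<le> m" "0 < x" "x < pi"
  shows "0 < cos_even_sum m n x"
proof -
  obtain j where "m = Suc j" using assms(1) by (cases m) auto
  moreover have "0 < even_binom_sum (Suc j) n (\<lambda>k. cos ((real k + 1/2) * x))" for n
    by (induction j arbitrary: n)
      (simp_all add: even_binom_sum_one_cos_pos[unfolded One_nat_def] assms even_binom_sum_Suc_left_pos)
  ultimately show ?thesis by (simp add: cos_even_sum_eq)
qed

lemma sin_even_sum_eq_cos_even_sum_reflect: "sin_even_sum m n x = cos_even_sum m n (pi - x)"
  unfolding sin_even_sum_def cos_even_sum_def
proof (rule sum.cong)
  fix k assume "k \<in> {k. k \<le> n \<and> even k}"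
  then obtain j where k: "k = 2 * j" by auto
  have "(real k + 1/2) * (pi - x) = 2 * real j * pi + (pi / 2 - (real k + 1/2) * x)"
    unfolding k by (simp add: field_simps)
  then have "cos ((real k + 1/2) * (pi - x)) = sin ((real k + 1/2) * x)"
    by (simp add: cos_add cos_diff)
  then show "real ((n - k + m) choose m) * sin ((real k + 1/2) * x) =
        real ((n - k + m) choose m) * cos ((real k + 1/2) * (pi - x))" by simp
qed simp

lemma sin_even_sum_one: "sin_even_sum m 1 x = real (m + 1) * sin (x / 2)"
proof -
  have "{k. k \<le> (1::nat) \<and> even k} = {0}" by auto
  then show ?thesis unfolding sin_even_sum_def by simp
qed

lemma sin_even_sum_one_small:
  assumes "0 < e"
  obtains x where "0 < x" "x < pi" "sin_even_sum m 1 x < e"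
proof
  define x where "x = min (pi / 2) (e / real (m + 1))"
  show "0 < x" "x < pi" using assms pi_gt_zero by (auto simp: x_def min_less_iff_disj)
  have "real (m + 1) * sin (x / 2) \<le> real (m + 1) * (x / 2)"
    using \<open>0 < x\<close> by (intro mult_left_mono sin_x_le_x) simp_all
  also have "\<dots> < real (m + 1) * x" using \<open>0 < x\<close> by simp
  also have "\<dots> \<le> e"
    using min.cobounded2[of "pi / 2" "e / real (m + 1)"] by (simp add: x_def le_divide_eq mult.commute)
  finally show "sin_even_sum m 1 x < e" unfolding sin_even_sum_one .
qed

theorem theorem3:
  fixes m :: nat
  assumes "m \<ge> 1"
  shows "(\<forall>n::nat. \<forall>x::real. n \<ge> 1 \<longrightarrow> 0 < x \<longrightarrow> x < pi \<longrightarrow>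
            cos_even_sum m n x > 0 \<and> sin_even_sum m n x > 0)
       \<and> (\<forall>\<epsilon>>0. \<exists>n::nat. \<exists>x::real. n \<ge> 1 \<and> 0 < x \<and> x < pi \<and> cos_even_sum m n x < \<epsilon>)
       \<and> (\<forall>\<epsilon>>0. \<exists>n::nat. \<exists>x::real. n \<ge> 1 \<and> 0 < x \<and> x < pi \<and> sin_even_sum m n x < \<epsilon>)"
proof (intro conjI allI impI)
  fix n :: nat and x :: real
  assume "0 < x" "x < pi"
  then show "0 < cos_even_sum m n x" "0 < sin_even_sum m n x"
    using assms cos_even_sum_pos by (simp_all add: sin_even_sum_eq_cos_even_sum_reflect)
next
  fix e :: real
  assume "0 < e"
  then obtain x where x: "0 < x" "x < pi" "sin_even_sum m 1 x < e"
    by (rule sin_even_sum_one_small)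
  then show "\<exists>n x. n \<ge> 1 \<and> 0 < x \<and> x < pi \<and> sin_even_sum m n x < e" by blast
  show "\<exists>n x. n \<ge> 1 \<and> 0 < x \<and> x < pi \<and> cos_even_sum m n x < e"
    using x by (intro exI[of _ 1] exI[of _ "pi - x"]) (simp add: sin_even_sum_eq_cos_even_sum_reflect)
qed

end
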